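(* There is an absolute constant $c$ such that the following holds. Let $\mu>0$, $n$ be such that $n_0:=n-\mu^2/4-1/2>0$, and let $\ell_0<\ell_1<n_0$ be nonnegative integers; write $k=n_0-\ell$, $k_0=n_0-\ell_0$, $k_1=n_0-\ell_1$. For $0\le\ell<n_0$ let $$\rho_\ell=\sqrt{\frac{\mu^2/4}{\mu^2/4+n_0-\ell}}+i\sqrt{\frac{n_0-\ell}{\mu^2/4+n_0-\ell}},\qquad\eta_\ell=\rho_0^2\rho_1^2\cdots\rho_\ell^2 .$$ Then for any complex numbers $g_{\ell_0},\dots,g_{\ell_1}$, $$\Big|\Re\sum_{\ell=\ell_0}^{\ell_1}g_\ell\eta_\ell\Big|\le c\big(\mu k_1^{-1/2}+1\big)|g_{\ell_1}|+c\sum_{\ell=\ell_0}^{\ell_1-1}\big(\mu k^{-1/2}+1\big)|g_{\ell+1}-g_\ell|,$$ $$\Big|\Re\sum_{\ell=\ell_0}^{\ell_1}g_\ell\eta_\ell^2\Big|\le c\big(\mu k_1^{-1/2}+\mu^{-1}k_0^{1/2}\big)|g_{\ell_1}|+c\sum_{\ell=\ell_0}^{\ell_1-1}\big(\mu k^{-1/2}+\mu^{-1}k_0^{1/2}\big)|g_{\ell+1}-g_\ell|.$$ *)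

theory Defs
  imports Complex_Main
begin

definition rho :: "real \<Rightarrow> real \<Rightarrow> nat \<Rightarrow> complex" where
  "rho \<mu> n0 l = Complex (sqrt ((\<mu>^2/4) / (\<mu>^2/4 + n0 - real l)))
                        (sqrt ((n0 - real l) / (\<mu>^2/4 + n0 - real l)))"

definition eta :: "real \<Rightarrow> real \<Rightarrow> nat \<Rightarrow> complex" where
  "eta \<mu> n0 l = (\<Prod>j\<in>{0..l}. (rho \<mu> n0 j)^2)"

end

theory Submission
  imports Defs
begin

(*
  Write \<rho>_j = cos \<theta>_j + i sin \<theta>_j with 0 < \<theta>_j < \<pi>/2, so cot \<theta>_j = R_j = \<mu> / (2 sqrt (n0 - j)),
  which increases with j.  For a unit vector z = e^(i\<theta>) one has
      z^2 = (1 - z^2) (-1/2 + i cot \<theta> / 2),     z^4 = (1 - z^4) (-1/2 + i cot (2\<theta>) / 2),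
  with cot (2\<theta>) = (R - 1/R)/2.  Writing P_j = \<rho>_0^2 \<cdots> \<rho>_(j-1)^2 (so \<eta>_j = P_(j+1)), these
  identities turn \<eta>_j and \<eta>_j^2 into telescoping differences P_j - P_(j+1) (resp. of squares)
  weighted by complex numbers with constant real part and monotone imaginary part.
  Abel summation then bounds the partial sums of \<eta> by 1 + 2 R_l and those of \<eta>^2 by
  1 + R_l + 1/R_(l0), and a second Abel summation against g yields the theorem with c = 3.
*)

lemma abel_summation:
  fixes g x :: "nat \<Rightarrow> 'a::ring"
  assumes "m \<le> M"
  shows "(\<Sum>l=m..M. g l * x l)
           = g M * (\<Sum>j=m..M. x j) - (\<Sum>l=m..<M. (g (Suc l) - g l) * (\<Sum>j=m..l. x j))"
  using assms
proof (induction M rule: dec_induct)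
  case (step M)
  then show ?case by (simp add: sum.atLeastLessThan_Suc algebra_simps)
qed simp

lemma abel_summation_bound:
  fixes g x :: "nat \<Rightarrow> 'a::real_normed_algebra" and B :: "nat \<Rightarrow> real"
  assumes "m \<le> M"
    and partial: "\<And>l. m \<le> l \<Longrightarrow> l \<le> M \<Longrightarrow> norm (\<Sum>j=m..l. x j) \<le> B l"
  shows "norm (\<Sum>l=m..M. g l * x l)
           \<le> B M * norm (g M) + (\<Sum>l=m..<M. B l * norm (g (Suc l) - g l))"
proof -
  have mult_bound: "norm (h * (\<Sum>j=m..l. x j)) \<le> B l * norm h"
    if "m \<le> l" "l \<le> M" for h l
    using norm_mult_ineq[of h "\<Sum>j=m..l. x j"] partial[OF that]
      mult_left_mono[OF partial[OF that], of "norm h"]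
    by (simp add: mult.commute)
  have "norm (\<Sum>l=m..M. g l * x l)
          \<le> norm (g M * (\<Sum>j=m..M. x j))
            + norm (\<Sum>l=m..<M. (g (Suc l) - g l) * (\<Sum>j=m..l. x j))"
    unfolding abel_summation[OF assms(1)] by (rule norm_triangle_ineq4)
  also have "norm (g M * (\<Sum>j=m..M. x j)) \<le> B M * norm (g M)"
    using mult_bound assms(1) by simp
  also have "norm (\<Sum>l=m..<M. (g (Suc l) - g l) * (\<Sum>j=m..l. x j))
               \<le> (\<Sum>l=m..<M. norm ((g (Suc l) - g l) * (\<Sum>j=m..l. x j)))"
    by (rule norm_sum)
  also have "\<dots> \<le> (\<Sum>l=m..<M. B l * norm (g (Suc l) - g l))"
    by (rule sum_mono) (use mult_bound in simp)
  finally show ?thesis by simp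
qed

lemma telescoping_sum_monotone_weights:
  fixes E :: "nat \<Rightarrow> complex" and a :: real and d :: "nat \<Rightarrow> real"
  assumes "m \<le> l"
    and E_bound: "\<And>j. m \<le> j \<Longrightarrow> j \<le> Suc l \<Longrightarrow> norm (E j) \<le> 1"
    and d_mono: "\<And>j. m \<le> j \<Longrightarrow> j < l \<Longrightarrow> d j \<le> d (Suc j)"
  shows "norm (\<Sum>j=m..l. Complex a (d j) * (E j - E (Suc j)))
           \<le> 2 * \<bar>a\<bar> + 2 * \<bar>d l\<bar> + 2 * (d l - d m)"
proof -
  have partial: "norm (\<Sum>j=m..k. E j - E (Suc j)) \<le> 2" if "m \<le> k" "k \<le> l" for k
  proof -
    have "(\<Sum>j=m..k. E j - E (Suc j)) = E m - E (Suc k)"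
      using sum_Suc_diff[of m k "\<lambda>j. - E j"] that by simp
    also have "norm \<dots> \<le> norm (E m) + norm (E (Suc k))" by (rule norm_triangle_ineq4)
    finally show ?thesis using E_bound[of m] E_bound[of "Suc k"] that by simp
  qed
  have "norm (\<Sum>j=m..l. Complex a (d j) * (E j - E (Suc j)))
          \<le> 2 * cmod (Complex a (d l)) + (\<Sum>j=m..<l. 2 * cmod (Complex a (d (Suc j)) - Complex a (d j)))"
    by (rule abel_summation_bound[OF assms(1) partial])
  also have "cmod (Complex a (d l)) \<le> \<bar>a\<bar> + \<bar>d l\<bar>"
    using cmod_le[of "Complex a (d l)"] by simp
  also have "(\<Sum>j=m..<l. 2 * cmod (Complex a (d (Suc j)) - Complex a (d j)))
               = 2 * (\<Sum>j=m..<l. d (Suc j) - d j)"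
    using d_mono by (simp add: sum_distrib_left cmod_def)
  also have "(\<Sum>j=m..<l. d (Suc j) - d j) = d l - d m"
    by (rule sum_Suc_diff'[OF assms(1)])
  finally show ?thesis by simp
qed

lemma unit_circle_square_identity:
  fixes p q :: real
  assumes "q > 0" "p^2 + q^2 = 1"
  shows "(Complex p q)^2 = (1 - (Complex p q)^2) * Complex (-1/2) (p / q / 2)"
proof -
  have p_sq: "p * p = 1 - q * q" using assms(2) by (simp add: power2_eq_square)
  show ?thesis
    using assms(1)
    by (simp add: complex_eq_iff power2_eq_square p_sq algebra_simps) (simp add: field_simps p_sq)
qed

text \<open>The same identity for \<open>z^2 = e^(2i\<theta>)\<close>, using \<open>cot (2\<theta>) = (cot \<theta> - tan \<theta>) / 2\<close>.\<close>
lemma unit_circle_fourth_power_identity: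
  fixes p q :: real
  assumes "p > 0" "q > 0" "p^2 + q^2 = 1"
  shows "((Complex p q)^2)^2 = (1 - ((Complex p q)^2)^2) * Complex (-1/2) ((p/q - q/p) / 4)"
proof -
  have square: "(Complex p q)^2 = Complex (p^2 - q^2) (2*p*q)"
    by (simp add: complex_eq_iff power2_eq_square)
  have "(p^2 - q^2)^2 + (2*p*q)^2 = (p^2 + q^2)^2"
    by (simp add: power2_eq_square algebra_simps)
  then have unit: "(p^2 - q^2)^2 + (2*p*q)^2 = 1" using assms(3) by simp
  have cot_double: "(p/q - q/p) / 4 = (p^2 - q^2) / (2*p*q) / 2"
    using assms(1,2) by (simp add: field_simps power2_eq_square)
  have "0 < 2*p*q" using assms(1,2) by simp
  then show ?thesis
    unfolding square cot_double by (rule unit_circle_square_identity[OF _ unit])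
qed

text \<open>\<open>rho_cot \<mu> n0 j\<close> is \<open>cot \<theta>_j = Re \<rho>_j / Im \<rho>_j\<close>.\<close>
definition rho_cot :: "real \<Rightarrow> real \<Rightarrow> nat \<Rightarrow> real" where
  "rho_cot \<mu> n0 j = \<mu> / (2 * sqrt (n0 - real j))"

lemma rho_cot_pos: "\<mu> > 0 \<Longrightarrow> real j < n0 \<Longrightarrow> rho_cot \<mu> n0 j > 0"
  by (simp add: rho_cot_def)

lemma rho_cot_mono:
  assumes "\<mu> > 0" "j \<le> k" "real k < n0"
  shows "rho_cot \<mu> n0 j \<le> rho_cot \<mu> n0 k"
proof -
  have "0 < sqrt (n0 - real k)" using assms(3) by simp
  moreover have "sqrt (n0 - real k) \<le> sqrt (n0 - real j)" using assms(2) by simp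
  ultimately show ?thesis
    unfolding rho_cot_def using assms(1) by (intro divide_left_mono) auto
qed

lemma rho_facts:
  assumes mu: "\<mu> > 0" and j: "real j < n0"
  shows rho_norm: "cmod (rho \<mu> n0 j) = 1"
    and rho_square_identity:
      "(rho \<mu> n0 j)^2 = (1 - (rho \<mu> n0 j)^2) * Complex (-1/2) (rho_cot \<mu> n0 j / 2)"
    and rho_fourth_power_identity:
      "((rho \<mu> n0 j)^2)^2 = (1 - ((rho \<mu> n0 j)^2)^2)
          * Complex (-1/2) ((rho_cot \<mu> n0 j - 1 / rho_cot \<mu> n0 j) / 4)"
proof -
  define A where "A = \<mu>^2/4"
  define k where "k = n0 - real j"
  define p where "p = sqrt (A/(A+k))"
  define q where "q = sqrt (k/(A+k))"
  have A_pos: "A > 0" using mu by (simp add: A_def)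
  have k_pos: "k > 0" using j by (simp add: k_def)
  have rho: "rho \<mu> n0 j = Complex p q"
    by (simp add: rho_def p_def q_def A_def k_def add_diff_eq)
  have p_pos: "p > 0" and q_pos: "q > 0" using A_pos k_pos by (simp_all add: p_def q_def)
  have "p^2 + q^2 = A/(A + k) + k/(A + k)" using A_pos k_pos by (simp add: p_def q_def)
  also have "\<dots> = 1" using A_pos k_pos by (simp add: add_divide_distrib[symmetric])
  finally have unit: "p^2 + q^2 = 1" .
  have "p/q = sqrt A / sqrt k"
    using A_pos k_pos by (simp add: p_def q_def real_sqrt_divide field_simps)
  also have "sqrt A = \<mu>/2" using mu by (simp add: A_def real_sqrt_divide)
  finally have cot: "p/q = rho_cot \<mu> n0 j" by (simp add: rho_cot_def k_def)
  show "cmod (rho \<mu> n0 j) = 1" by (simp add: rho complex_norm unit)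
  show "(rho \<mu> n0 j)^2 = (1 - (rho \<mu> n0 j)^2) * Complex (-1/2) (rho_cot \<mu> n0 j / 2)"
    unfolding rho cot[symmetric] by (rule unit_circle_square_identity[OF q_pos unit])
  have "q/p = 1 / (p/q)" by simp
  then show "((rho \<mu> n0 j)^2)^2 = (1 - ((rho \<mu> n0 j)^2)^2)
               * Complex (-1/2) ((rho_cot \<mu> n0 j - 1 / rho_cot \<mu> n0 j) / 4)"
    unfolding rho cot[symmetric]
    using unit_circle_fourth_power_identity[OF p_pos q_pos unit] by simp
qed

definition rho_prod :: "real \<Rightarrow> real \<Rightarrow> nat \<Rightarrow> complex" where
  "rho_prod \<mu> n0 j = (\<Prod>i<j. (rho \<mu> n0 i)^2)"

lemma eta_eq_rho_prod: "eta \<mu> n0 j = rho_prod \<mu> n0 (Suc j)"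
  unfolding eta_def rho_prod_def by (simp only: atLeast0AtMost lessThan_Suc_atMost)

lemma rho_prod_Suc: "rho_prod \<mu> n0 (Suc j) = rho_prod \<mu> n0 j * (rho \<mu> n0 j)^2"
  by (simp add: rho_prod_def)

text \<open>All factors \<open>\<rho>_i\<close>, \<open>i < j\<close>, are unit vectors as long as \<open>j - 1 < n0\<close>.\<close>
lemma norm_rho_prod:
  assumes "\<mu> > 0" "real j < n0 + 1"
  shows "norm (rho_prod \<mu> n0 j) \<le> 1"
proof -
  have "norm (rho_prod \<mu> n0 j) \<le> (\<Prod>i<j. norm ((rho \<mu> n0 i)^2))"
    unfolding rho_prod_def by (rule norm_prod_le)
  also have "\<dots> = 1"
    using assms by (intro prod.neutral) (simp add: norm_power rho_norm)
  finally show ?thesis .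
qed

lemma weighted_telescoping_step:
  fixes P w c :: "'a::comm_ring_1"
  assumes "w = (1 - w) * c"
  shows "P * w = c * (P - P * w)"
proof -
  have "P * w = P * ((1 - w) * c)" using arg_cong[OF assms, of "(*) P"] .
  then show ?thesis by (simp add: algebra_simps)
qed

lemma eta_telescoping:
  assumes mu: "\<mu> > 0" and j: "real j < n0"
  shows "eta \<mu> n0 j = Complex (-1/2) (rho_cot \<mu> n0 j / 2)
                         * (rho_prod \<mu> n0 j - rho_prod \<mu> n0 (Suc j))"
    and "(eta \<mu> n0 j)^2 = Complex (-1/2) ((rho_cot \<mu> n0 j - 1 / rho_cot \<mu> n0 j) / 4)
                         * ((rho_prod \<mu> n0 j)^2 - (rho_prod \<mu> n0 (Suc j))^2)"
  using weighted_telescoping_step[OF rho_square_identity[OF mu j], of "rho_prod \<mu> n0 j"]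
    weighted_telescoping_step[OF rho_fourth_power_identity[OF mu j], of "(rho_prod \<mu> n0 j)^2"]
  by (simp_all add: eta_eq_rho_prod rho_prod_Suc power_mult_distrib)

lemma cot_double_weight_bound:
  fixes a b :: real
  assumes "0 < b" "b \<le> a"
  shows "2 * \<bar>-1/2\<bar> + 2 * \<bar>(a - 1/a) / 4\<bar> + 2 * ((a - 1/a) / 4 - (b - 1/b) / 4) \<le> 1 + a + 1/b"
proof -
  let ?s = "a + 1/b"
  have "0 < 1/a" "1/a \<le> 1/b" using assms by (auto simp: frac_le)
  then have "a - 1/a \<le> ?s" "-(a - 1/a) \<le> ?s" "(a - 1/a) - (b - 1/b) \<le> ?s"
    using assms by linarith+
  then have abs_bound: "\<bar>a - 1/a\<bar> \<le> ?s" and increase_bound: "(a - 1/a) - (b - 1/b) \<le> ?s"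
    by (simp_all only: abs_le_iff)
  have "2 * \<bar>-1/2\<bar> + 2 * \<bar>(a - 1/a) / 4\<bar> + 2 * ((a - 1/a) / 4 - (b - 1/b) / 4)
          = 1 + (\<bar>a - 1/a\<bar> + ((a - 1/a) - (b - 1/b))) / 2"
    by (simp add: field_simps)
  also have "\<dots> \<le> 1 + (?s + ?s) / 2"
    using abs_bound increase_bound by (intro add_left_mono divide_right_mono add_mono) auto
  also have "\<dots> = 1 + a + 1/b" by simp
  finally show ?thesis .
qed

lemma eta_partial_sum_bounds:
  assumes mu: "\<mu> > 0" and "m \<le> l" and l: "real l < n0"
  shows "norm (\<Sum>j=m..l. eta \<mu> n0 j) \<le> 1 + 2 * rho_cot \<mu> n0 l"
    and "norm (\<Sum>j=m..l. (eta \<mu> n0 j)^2) \<le> 1 + rho_cot \<mu> n0 l + 1 / rho_cot \<mu> n0 m"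
proof -
  let ?R = "rho_cot \<mu> n0" and ?P = "rho_prod \<mu> n0"
  have j_lt: "real j < n0" if "j \<le> l" for j using that l by linarith
  have P_bound: "norm (?P j) \<le> 1" if "j \<le> Suc l" for j
    using norm_rho_prod[OF mu] that l by simp
  have R_mono: "?R j \<le> ?R k" if "j \<le> k" "k \<le> l" for j k
    using rho_cot_mono[OF mu that(1) j_lt[OF that(2)]] .
  have R_pos: "?R j > 0" if "j \<le> l" for j using rho_cot_pos[OF mu j_lt[OF that]] .
  have inv_R_anti: "1 / ?R k \<le> 1 / ?R j" if "j \<le> k" "k \<le> l" for j k
    using R_mono[OF that] R_pos that by (intro divide_left_mono) auto
  show "norm (\<Sum>j=m..l. eta \<mu> n0 j) \<le> 1 + 2 * ?R l"
  proof -
    have "(\<Sum>j=m..l. eta \<mu> n0 j) = (\<Sum>j=m..l. Complex (-1/2) (?R j / 2) * (?P j - ?P (Suc j)))"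
      using eta_telescoping(1)[OF mu j_lt] by simp
    also have "norm \<dots> \<le> 2 * \<bar>-1/2\<bar> + 2 * \<bar>?R l / 2\<bar> + 2 * (?R l / 2 - ?R m / 2)"
      by (rule telescoping_sum_monotone_weights[OF \<open>m \<le> l\<close> P_bound])
         (use R_mono in \<open>simp_all add: divide_right_mono\<close>)
    finally show ?thesis using R_pos[of l] R_pos[of m] \<open>m \<le> l\<close> by simp
  qed
  show "norm (\<Sum>j=m..l. (eta \<mu> n0 j)^2) \<le> 1 + ?R l + 1 / ?R m"
  proof -
    let ?d = "\<lambda>j. (?R j - 1 / ?R j) / 4"
    have "(\<Sum>j=m..l. (eta \<mu> n0 j)^2) = (\<Sum>j=m..l. Complex (-1/2) (?d j) * ((?P j)^2 - (?P (Suc j))^2))"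
      using eta_telescoping(2)[OF mu j_lt] by simp
    also have "norm \<dots> \<le> 2 * \<bar>-1/2\<bar> + 2 * \<bar>?d l\<bar> + 2 * (?d l - ?d m)"
    proof (rule telescoping_sum_monotone_weights[OF \<open>m \<le> l\<close>])
      show "norm ((?P j)^2) \<le> 1" if "m \<le> j" "j \<le> Suc l" for j
        using P_bound[of j] that by (simp add: norm_power power_le_one)
      show "?d j \<le> ?d (Suc j)" if "m \<le> j" "j < l" for j
        using R_mono[of j "Suc j"] inv_R_anti[of j "Suc j"] that by (simp add: divide_right_mono)
    qed
    also have "\<dots> \<le> 1 + ?R l + 1 / ?R m"
      using cot_double_weight_bound[OF R_pos[OF \<open>m \<le> l\<close>] R_mono[OF \<open>m \<le> l\<close> order_refl]] by simp
    finally show ?thesis .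
  qed
qed

lemma weights_as_rho_cot:
  assumes "\<mu> > 0" "real l < n0"
  shows "\<mu> * (n0 - real l) powr (-1/2) = 2 * rho_cot \<mu> n0 l"
    and "(n0 - real l) powr (1/2) / \<mu> = 1 / (2 * rho_cot \<mu> n0 l)"
proof -
  have k_pos: "n0 - real l > 0" using assms(2) by simp
  have "(n0 - real l) powr (-1/2) = inverse ((n0 - real l) powr (1/2))"
    using powr_minus[of "n0 - real l" "1/2"] by simp
  then show "\<mu> * (n0 - real l) powr (-1/2) = 2 * rho_cot \<mu> n0 l"
    using k_pos by (simp add: rho_cot_def powr_half_sqrt field_simps)
  show "(n0 - real l) powr (1/2) / \<mu> = 1 / (2 * rho_cot \<mu> n0 l)"
    using k_pos assms(1) by (simp add: rho_cot_def powr_half_sqrt field_simps)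
qed

lemma Re_abel_summation_bound:
  fixes g x :: "nat \<Rightarrow> complex" and W :: "nat \<Rightarrow> real"
  assumes "m \<le> M" and "\<And>l. m \<le> l \<Longrightarrow> l \<le> M \<Longrightarrow> norm (\<Sum>j=m..l. x j) \<le> c * W l"
  shows "\<bar>Re (\<Sum>l=m..M. g l * x l)\<bar>
           \<le> c * W M * cmod (g M) + c * (\<Sum>l=m..<M. W l * cmod (g (Suc l) - g l))"
proof -
  have "\<bar>Re (\<Sum>l=m..M. g l * x l)\<bar> \<le> norm (\<Sum>l=m..M. g l * x l)"
    by (rule abs_Re_le_cmod)
  also have "\<dots> \<le> c * W M * cmod (g M) + (\<Sum>l=m..<M. c * W l * cmod (g (Suc l) - g l))"
    by (rule abel_summation_bound[OF assms])
  also have "\<dots> = c * W M * cmod (g M) + c * (\<Sum>l=m..<M. W l * cmod (g (Suc l) - g l))"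
    unfolding sum_distrib_left by (simp only: mult.assoc)
  finally show ?thesis .
qed

text \<open>The partial-sum bounds in terms of the weights of the theorem, \<open>X_l = \<mu> (n0 - l)^(-1/2) = 2R_l\<close>
  and \<open>Y = (n0 - l0)^(1/2) / \<mu> = 1/(2R_l0)\<close>: \<open>1 + 2R_l \<le> 3 (X_l + 1)\<close>, and
  \<open>1 + R_l + 1/R_l0 \<le> 3 (X_l + Y)\<close> because \<open>X_l Y = R_l / R_l0 \<ge> 1\<close> forces \<open>X_l + Y \<ge> 1\<close>.\<close>
lemma eta_partial_sum_weight_bounds:
  assumes mu: "\<mu> > 0" and "l0 \<le> l" and l: "real l < n0"
  defines "X \<equiv> \<mu> * (n0 - real l) powr (-1/2)" and "Y \<equiv> (n0 - real l0) powr (1/2) / \<mu>"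
  shows "norm (\<Sum>j=l0..l. eta \<mu> n0 j) \<le> 3 * (X + 1)"
    and "norm (\<Sum>j=l0..l. (eta \<mu> n0 j)^2) \<le> 3 * (X + Y)"
proof -
  let ?R = "rho_cot \<mu> n0"
  have l0: "real l0 < n0" using \<open>l0 \<le> l\<close> l by linarith
  have X: "X = 2 * ?R l" unfolding X_def by (rule weights_as_rho_cot(1)[OF mu l])
  have Y: "Y = 1 / (2 * ?R l0)" unfolding Y_def by (rule weights_as_rho_cot(2)[OF mu l0])
  have "X > 0" "Y > 0" using X Y rho_cot_pos[OF mu l] rho_cot_pos[OF mu l0] by simp_all
  have product: "1 \<le> X * Y"
    using X Y rho_cot_mono[OF mu \<open>l0 \<le> l\<close> l] rho_cot_pos[OF mu l0] by simp
  have one_le_XY: "1 \<le> X + Y"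
  proof (cases "1 \<le> X")
    case False
    then have "X * Y \<le> Y" using \<open>Y > 0\<close> by (simp add: mult_left_le_one_le)
    then show ?thesis using product \<open>X > 0\<close> by linarith
  qed (use \<open>Y > 0\<close> in simp)
  show "norm (\<Sum>j=l0..l. eta \<mu> n0 j) \<le> 3 * (X + 1)"
    using eta_partial_sum_bounds(1)[OF mu \<open>l0 \<le> l\<close> l] X \<open>X > 0\<close> by simp
  show "norm (\<Sum>j=l0..l. (eta \<mu> n0 j)^2) \<le> 3 * (X + Y)"
    using eta_partial_sum_bounds(2)[OF mu \<open>l0 \<le> l\<close> l] X Y \<open>X > 0\<close> one_le_XY by simp
qed

lemma eta_weighted_sum_bounds:
  fixes g :: "nat \<Rightarrow> complex"
  assumes mu: "\<mu> > 0" and "l0 \<le> l1" and l1: "real l1 < n0"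
  defines "X \<equiv> \<lambda>l. \<mu> * (n0 - real l) powr (-1/2)"
    and "Y \<equiv> (n0 - real l0) powr (1/2) / \<mu>"
  shows "\<bar>Re (\<Sum>l=l0..l1. g l * eta \<mu> n0 l)\<bar>
           \<le> 3 * (X l1 + 1) * cmod (g l1) + 3 * (\<Sum>l=l0..<l1. (X l + 1) * cmod (g (Suc l) - g l))"
    and "\<bar>Re (\<Sum>l=l0..l1. g l * (eta \<mu> n0 l)^2)\<bar>
           \<le> 3 * (X l1 + Y) * cmod (g l1) + 3 * (\<Sum>l=l0..<l1. (X l + Y) * cmod (g (Suc l) - g l))"
proof -
  have l_lt: "real l < n0" if "l \<le> l1" for l using that l1 by linarith
  show "\<bar>Re (\<Sum>l=l0..l1. g l * eta \<mu> n0 l)\<bar>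
          \<le> 3 * (X l1 + 1) * cmod (g l1) + 3 * (\<Sum>l=l0..<l1. (X l + 1) * cmod (g (Suc l) - g l))"
    using eta_partial_sum_weight_bounds(1)[OF mu _ l_lt] unfolding X_def
    by (intro Re_abel_summation_bound[OF \<open>l0 \<le> l1\<close>]) simp
  show "\<bar>Re (\<Sum>l=l0..l1. g l * (eta \<mu> n0 l)^2)\<bar>
          \<le> 3 * (X l1 + Y) * cmod (g l1) + 3 * (\<Sum>l=l0..<l1. (X l + Y) * cmod (g (Suc l) - g l))"
    using eta_partial_sum_weight_bounds(2)[OF mu _ l_lt] unfolding X_def Y_def
    by (intro Re_abel_summation_bound[OF \<open>l0 \<le> l1\<close>]) simp
qed

theorem mainTheorem16:
  shows "\<exists>c::real. \<forall>(\<mu>::real) (n::real) (l0::nat) (l1::nat) (g::nat \<Rightarrow> complex).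
    let n0 = n - \<mu>^2/4 - 1/2 in
    (\<mu> > 0 \<and> n0 > 0 \<and> l0 < l1 \<and> real l1 < n0) \<longrightarrow>
    (\<bar>Re (\<Sum>l=l0..l1. g l * eta \<mu> n0 l)\<bar>
       \<le> c * (\<mu> * (n0 - real l1) powr (-1/2) + 1) * cmod (g l1)
         + c * (\<Sum>l=l0..<l1. (\<mu> * (n0 - real l) powr (-1/2) + 1) * cmod (g (Suc l) - g l))
     \<and>
     \<bar>Re (\<Sum>l=l0..l1. g l * (eta \<mu> n0 l)^2)\<bar>
       \<le> c * (\<mu> * (n0 - real l1) powr (-1/2) + (n0 - real l0) powr (1/2) / \<mu>) * cmod (g l1)
         + c * (\<Sum>l=l0..<l1. (\<mu> * (n0 - real l) powr (-1/2) + (n0 - real l0) powr (1/2) / \<mu>)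
                              * cmod (g (Suc l) - g l)))"
  unfolding Let_def
  by (intro exI[of _ 3] allI impI conjI; elim conjE; rule eta_weighted_sum_bounds) auto

end
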